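(* Consider the repeated pursuit-evasion game described in the context, in which the defender uses Exp3.M-VP with parameter $\eta=\min\{1,\sqrt{Na\ln(N/b)/((a+(e-2)b)bT)}\}$ and the attacker uses a no-regret algorithm, and neither player knows the algorithm used by the other. If the number of scanned locations $(M_t)$ is a wide-sense stationary process with mean $\nu$, then the average reward of the defender over an infinite horizon, $\bar s_\infty:=\liminf_{T\to\infty}\mathbb{E}\big[\frac1T\sum_{t=1}^T s^J(t)\big]$, satisfies $\bar s_\infty=\frac{\nu}{N}$.
   Context: Game: there are $N$ locations $\mathcal{N}=\{1,\dots,N\}$ and integers $1\le a\le b<N$. At each discrete time $t$, an attacker selects one location $I_t\in\mathcal{N}$ to compromise and, simultaneously, a defender selects a set $J_t\subset\mathcal{N}$ of $M_t$ locations to scan, where $M_t\in\{a,\dots,b\}$ is given exogenously. Let $y_k(t)=1$ if $I_t=k$ and $0$ otherwise, and $x_k(t)=1$ if $k\notin J_t$ and $0$ otherwise. The attacker's reward is $r^I(t)=x_{I_t}(t)$ and the defender's reward is $s^J(t)=\sum_{j\in J_t}y_j(t)$; each player observes only its own reward for its chosen action(s). A no-regret algorithm for the attacker is one whose expected total reward is at least $\max_{k\in\mathcal{N}}\sum_{t=1}^T x_k(t)-o(T)$. Algorithm Exp3.M-VP with parameter $\eta\in(0,1]$ (for the defender, treating $y_i(t)$ as rewards): $w_i(1)=1$. At round $t$: receive $M_t$; if $\max_j w_j(t)\ge(\frac1{M_t}-\frac\eta N)\sum_i w_i(t)/(1-\eta)$, choose $\kappa_t$ with $\kappa_t/(\sum_{i:w_i(t)\ge\kappa_t}\kappa_t+\sum_{i:w_i(t)<\kappa_t}w_i(t))=(\frac1{M_t}-\frac\eta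 N)/(1-\eta)$, let $S_0(t)=\{i:w_i(t)\ge\kappa_t\}$ and $w'_i(t)=\kappa_t$ on $S_0(t)$; else $S_0(t)=\emptyset$. Let $w'_i(t)=w_i(t)$ off $S_0(t)$. Set $\hat\alpha_i(t)=M_t((1-\eta)w'_i(t)/\sum_j w'_j(t)+\eta/N)$; draw $J_t$, $|J_t|=M_t$, with $P(i\in J_t)=\hat\alpha_i(t)$ (dependent rounding); observe $y_i(t)$, $i\in J_t$; $\hat y_i(t)=y_i(t)/\hat\alpha_i(t)$ if $i\in J_t$, else $0$; $w_i(t+1)=w_i(t)\exp(M_t\eta\hat y_i(t)/N)$ if $i\notin S_0(t)$, else unchanged. *)

theory Defs
  imports "HOL-Probability.Probability" "HOL-Library.Landau_Symbols"
begin

text \<open>A history is the list of past rounds (I_s, J_s): attacked location and scanned set.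
  The attacker only observes its own actions and rewards r = x_{I_s}(s) = (I_s not in J_s).
  Attacker and defender move simultaneously (independently given the history).\<close>

primrec play :: "((nat \<times> bool) list \<Rightarrow> nat pmf) \<Rightarrow> ((nat \<times> nat set) list \<Rightarrow> nat set pmf)
    \<Rightarrow> nat \<Rightarrow> (nat \<times> nat set) list pmf" where
  "play att env 0 = return_pmf []"
| "play att env (Suc t) =
     bind_pmf (play att env t) (\<lambda>h.
       bind_pmf (att (map (\<lambda>(i, J). (i, i \<notin> J)) h)) (\<lambda>i.
         bind_pmf (env h) (\<lambda>J. return_pmf (h @ [(i, J)]))))"

definition att_total :: "(nat \<times> nat set) list \<Rightarrow> real" where
  "att_total h = sum_list (map (\<lambda>(i, J). if i \<notin> J then 1 else 0) h)"

definition loc_total :: "nat \<Rightarrow> (nat \<times> nat set) list \<Rightarrow> real" where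
  "loc_total k h = sum_list (map (\<lambda>(i, J). if k \<notin> J then 1 else 0) h)"

definition def_total :: "(nat \<times> nat set) list \<Rightarrow> real" where
  "def_total h = sum_list (map (\<lambda>(i, J). \<Sum>j\<in>J. if i = j then 1 else 0) h)"

text \<open>No-regret attacker algorithm (the attacker may know the horizon T; att T is its
  behavioural strategy for horizon T).\<close>
definition attacker_no_regret :: "nat \<Rightarrow> (nat \<Rightarrow> (nat \<times> bool) list \<Rightarrow> nat pmf) \<Rightarrow> bool" where
  "attacker_no_regret N att \<longleftrightarrow>
     (\<forall>T h. set_pmf (att T h) \<subseteq> {1..N}) \<and>
     (\<exists>g :: nat \<Rightarrow> real. g \<in> o(\<lambda>T. real T) \<and>
        (\<forall>T env. Max ((\<lambda>k. measure_pmf.expectation (play (att T) env T) (loc_total k)) ` {1..N})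
                   - g T
                 \<le> measure_pmf.expectation (play (att T) env T) att_total))"

definition kappa :: "real \<Rightarrow> nat \<Rightarrow> nat \<Rightarrow> (nat \<Rightarrow> real) \<Rightarrow> real" where
  "kappa \<eta> N m w = (SOME \<kappa>. \<kappa> / ((\<Sum>i\<in>{i\<in>{1..N}. w i \<ge> \<kappa>}. \<kappa>) + (\<Sum>i\<in>{i\<in>{1..N}. w i < \<kappa>}. w i))
                         = (1 / real m - \<eta> / real N) / (1 - \<eta>))"

definition S0 :: "real \<Rightarrow> nat \<Rightarrow> nat \<Rightarrow> (nat \<Rightarrow> real) \<Rightarrow> nat set" where
  "S0 \<eta> N m w =
     (if Max (w ` {1..N}) \<ge> (1 / real m - \<eta> / real N) * (\<Sum>i\<in>{1..N}. w i) / (1 - \<eta>)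
      then {i\<in>{1..N}. w i \<ge> kappa \<eta> N m w} else {})"

definition wprime :: "real \<Rightarrow> nat \<Rightarrow> nat \<Rightarrow> (nat \<Rightarrow> real) \<Rightarrow> nat \<Rightarrow> real" where
  "wprime \<eta> N m w i = (if i \<in> S0 \<eta> N m w then kappa \<eta> N m w else w i)"

definition alpha_hat :: "real \<Rightarrow> nat \<Rightarrow> nat \<Rightarrow> (nat \<Rightarrow> real) \<Rightarrow> nat \<Rightarrow> real" where
  "alpha_hat \<eta> N m w i =
     real m * ((1 - \<eta>) * wprime \<eta> N m w i / (\<Sum>j\<in>{1..N}. wprime \<eta> N m w j) + \<eta> / real N)"

definition exp3_step :: "real \<Rightarrow> nat \<Rightarrow> nat \<Rightarrow> (nat \<Rightarrow> real) \<Rightarrow> nat \<Rightarrow> nat set \<Rightarrow> nat \<Rightarrow> real" where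
  "exp3_step \<eta> N m w I J i =
     (let y_hat = (if i \<in> J then (if I = i then 1 else 0) / alpha_hat \<eta> N m w i else 0)
      in if i \<in> S0 \<eta> N m w then w i else w i * exp (real m * \<eta> * y_hat / real N))"

text \<open>weights w(t) at round t = length h + 1, given the M-sequence ms (rounds numbered from 1)\<close>
definition exp3_weights :: "real \<Rightarrow> nat \<Rightarrow> (nat \<Rightarrow> nat) \<Rightarrow> (nat \<times> nat set) list \<Rightarrow> nat \<Rightarrow> real" where
  "exp3_weights \<eta> N ms h =
     foldl (\<lambda>w p. exp3_step \<eta> N (ms (fst p)) w (fst (snd p)) (snd (snd p)))
       (\<lambda>_. 1) (zip [1..<length h + 1] h)"

definition valid_rounding :: "nat \<Rightarrow> ((nat \<Rightarrow> real) \<Rightarrow> nat \<Rightarrow> nat set pmf) \<Rightarrow> bool" where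
  "valid_rounding N rnd \<longleftrightarrow>
     (\<forall>p m. m \<le> N \<and> (\<forall>i\<in>{1..N}. 0 \<le> p i \<and> p i \<le> 1) \<and> (\<Sum>i\<in>{1..N}. p i) = real m \<longrightarrow>
        set_pmf (rnd p m) \<subseteq> {J. J \<subseteq> {1..N} \<and> card J = m} \<and>
        (\<forall>i\<in>{1..N}. measure_pmf.prob (rnd p m) {J. i \<in> J} = p i))"

definition exp3mvp :: "real \<Rightarrow> nat \<Rightarrow> ((nat \<Rightarrow> real) \<Rightarrow> nat \<Rightarrow> nat set pmf) \<Rightarrow> (nat \<Rightarrow> nat)
    \<Rightarrow> (nat \<times> nat set) list \<Rightarrow> nat set pmf" where
  "exp3mvp \<eta> N rnd ms h =
     (let m = ms (length h + 1) in rnd (alpha_hat \<eta> N m (exp3_weights \<eta> N ms h)) m)"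

definition eta_T :: "nat \<Rightarrow> nat \<Rightarrow> nat \<Rightarrow> nat \<Rightarrow> real" where
  "eta_T N a b T = min 1 (sqrt (real N * real a * ln (real N / real b) /
                               ((real a + (exp 1 - 2) * real b) * real b * real T)))"

definition wide_sense_stationary :: "'w measure \<Rightarrow> (nat \<Rightarrow> 'w \<Rightarrow> nat) \<Rightarrow> real \<Rightarrow> bool" where
  "wide_sense_stationary P X \<nu> \<longleftrightarrow>
     (\<forall>t\<ge>1. integrable P (\<lambda>\<omega>. (real (X t \<omega>))\<^sup>2)) \<and>
     (\<forall>t\<ge>1. (\<integral>\<omega>. real (X t \<omega>) \<partial>P) = \<nu>) \<and>
     (\<forall>s t h. 1 \<le> s \<longrightarrow> 1 \<le> t \<longrightarrow>
        (\<integral>\<omega>. (real (X s \<omega>) - \<nu>) * (real (X (s + h) \<omega>) - \<nu>) \<partial>P)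
        = (\<integral>\<omega>. (real (X t \<omega>) - \<nu>) * (real (X (t + h) \<omega>) - \<nu>) \<partial>P))"

end

theory Submission
  imports Defs
begin

text \<open>
  Upper bound: in round \<open>t\<close> the \<open>N\<close> locations leave \<open>N - M\<^sub>t\<close> unscanned slots in total, so the
  best fixed location collects at least \<open>T - (M\<^sub>1 + \<dots> + M\<^sub>T) / N\<close>, and an attacker with regret
  \<open>o(T)\<close> leaves the defender at most \<open>(M\<^sub>1 + \<dots> + M\<^sub>T) / N + o(T)\<close>.

  Lower bound, against every attacker: for the Exp3.M-VP weights \<open>w\<close>, the potential
  \<open>def_total - N (1 - \<eta>) / \<eta> \<cdot> D\<close> with \<open>D = ln (mean w) - mean (ln w) \<ge> 0\<close> starts at \<open>0\<close> and
  grows in expectation by at least \<open>(1 - 2 \<eta>) M\<^sub>t / N\<close> in round \<open>t\<close>, whichever location is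
  attacked. Hence the defender expects at least \<open>(1 - 2 \<eta>) (M\<^sub>1 + \<dots> + M\<^sub>T) / N\<close>.

  Averaging over the scan process (\<open>E M\<^sub>t = \<nu>\<close>) and letting \<open>\<eta>\<^sub>T \<rightarrow> 0\<close> squeezes the average
  reward to \<open>\<nu> / N\<close>.
\<close>

section \<open>Plays\<close>

lemma length_play: "h \<in> set_pmf (play att env t) \<Longrightarrow> length h = t"
  by (induction t arbitrary: h) auto

lemma finite_set_pmf_play:
  assumes "\<And>h. finite (set_pmf (att h))" and "\<And>h. finite (set_pmf (env h))"
  shows "finite (set_pmf (play att env t))"
  using assms by (induction t) auto

lemma set_pmf_play_induct[consumes 1, case_names Nil snoc]:
  assumes "h \<in> set_pmf (play att env t)"
    and "P []"
    and "\<And>h i J. h \<in> set_pmf (play att env (length h)) \<Longrightarrow> P h \<Longrightarrow> J \<in> set_pmf (env h) \<Longrightarrow>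
           P (h @ [(i, J)])"
  shows "P h"
  using assms(1)
proof (induction t arbitrary: h)
  case 0
  then show ?case using assms(2) by simp
next
  case (Suc t)
  then obtain h' i J where "h = h' @ [(i, J)]" "h' \<in> set_pmf (play att env t)"
    "J \<in> set_pmf (env h')"
    by auto
  then show ?case using assms(3)[of h' J i] Suc.IH length_play by metis
qed

lemma play_cong:
  assumes "\<And>h. length h < t \<Longrightarrow> env h = env' h"
  shows "play att env t = play att env' t"
  using assms
proof (induction t)
  case (Suc t)
  then have "play att env t = play att env' t" by simp
  moreover have "env h = env' h" if "h \<in> set_pmf (play att env t)" for h
    using Suc.prems length_play[OF that] by simp
  ultimately show ?case by (auto intro!: bind_pmf_cong)
qed simp

lemma expectation_bind_pmf_finite:
  fixes F :: "'b \<Rightarrow> real"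
  assumes "finite (set_pmf p)" and "\<And>x. x \<in> set_pmf p \<Longrightarrow> finite (set_pmf (f x))"
  shows "measure_pmf.expectation (bind_pmf p f) F =
    measure_pmf.expectation p (\<lambda>x. measure_pmf.expectation (f x) F)"
  using assms by (subst pmf_expectation_bind[of "set_pmf p"])
    (auto simp: integral_measure_pmf[of "set_pmf p"])

lemma expectation_play_Suc:
  fixes F :: "(nat \<times> nat set) list \<Rightarrow> real"
  assumes "\<And>h. finite (set_pmf (att h))" and "\<And>h. finite (set_pmf (env h))"
  shows "measure_pmf.expectation (play att env (Suc t)) F =
    measure_pmf.expectation (play att env t) (\<lambda>h.
      measure_pmf.expectation (att (map (\<lambda>(i, J). (i, i \<notin> J)) h)) (\<lambda>i.
        measure_pmf.expectation (env h) (\<lambda>J. F (h @ [(i, J)]))))"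
  using assms finite_set_pmf_play[OF assms, where t = t]
  by (simp add: expectation_bind_pmf_finite)

lemma expectation_play_ge:
  fixes F :: "(nat \<times> nat set) list \<Rightarrow> real" and c :: "nat \<Rightarrow> real"
  assumes fin_att: "\<And>h. finite (set_pmf (att h))" and fin_env: "\<And>h. finite (set_pmf (env h))"
    and gain: "\<And>h i. i \<in> set_pmf (att (map (\<lambda>(i, J). (i, i \<notin> J)) h)) \<Longrightarrow>
       F h + c (length h + 1) \<le> measure_pmf.expectation (env h) (\<lambda>J. F (h @ [(i, J)]))"
  shows "F [] + (\<Sum>k=1..t. c k) \<le> measure_pmf.expectation (play att env t) F"
proof (induction t)
  case (Suc t)
  let ?p = "play att env t"
  let ?q = "\<lambda>h. att (map (\<lambda>(i, J). (i, i \<notin> J)) h)"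
  let ?G = "\<lambda>h. measure_pmf.expectation (?q h) (\<lambda>i. measure_pmf.expectation (env h) (\<lambda>J. F (h @ [(i, J)])))"
  have fin_p: "finite (set_pmf ?p)" by (rule finite_set_pmf_play[OF fin_att fin_env])
  have step: "F h + c (Suc t) \<le> ?G h" if "h \<in> set_pmf ?p" for h
  proof -
    have "F h + c (Suc t) = measure_pmf.expectation (?q h) (\<lambda>i. F h + c (length h + 1))"
      using length_play[OF that] by simp
    also have "\<dots> \<le> ?G h"
      by (intro integral_mono_AE AE_pmfI gain integrable_measure_pmf_finite fin_att)
    finally show ?thesis .
  qed
  have "F [] + (\<Sum>k=1..Suc t. c k) = (F [] + (\<Sum>k=1..t. c k)) + c (Suc t)" by simp
  also have "\<dots> \<le> measure_pmf.expectation ?p F + c (Suc t)" using Suc by simp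
  also have "\<dots> = measure_pmf.expectation ?p (\<lambda>h. F h + c (Suc t))"
    by (simp add: integrable_measure_pmf_finite[OF fin_p])
  also have "\<dots> \<le> measure_pmf.expectation ?p ?G"
    by (intro integral_mono_AE AE_pmfI step integrable_measure_pmf_finite fin_p)
  also have "\<dots> = measure_pmf.expectation (play att env (Suc t)) F"
    by (rule expectation_play_Suc[OF fin_att fin_env, symmetric])
  finally show ?case .
qed simp

section \<open>Rewards and the upper bound\<close>

lemma def_total_snoc:
  "finite J \<Longrightarrow> def_total (h @ [(i, J)]) = def_total h + (if i \<in> J then 1 else 0)"
  by (simp add: def_total_def)

lemma def_total_bounds: "0 \<le> def_total h \<and> def_total h \<le> length h"
proof (induction h)
  case (Cons p h)
  obtain i J where "p = (i, J)" by fastforce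
  then show ?case using Cons by (cases "finite J") (auto simp: def_total_def)
qed (simp add: def_total_def)

lemma att_total_plus_def_total:
  "\<forall>(i, J) \<in> set h. finite J \<Longrightarrow> att_total h + def_total h = length h"
  by (induction h) (auto simp: att_total_def def_total_def)

lemma sum_unscanned_indicator:
  fixes J :: "nat set"
  assumes "J \<subseteq> {1..N}"
  shows "(\<Sum>k\<in>{1..N}. if k \<notin> J then 1 else 0) = real N - card J"
proof -
  have "(\<Sum>k\<in>{1..N}. if k \<notin> J then 1 else 0) = real (card ({1..N} - J))"
    by (simp add: sum.If_cases Diff_eq Collect_neg_eq)
  also have "\<dots> = real N - card J"
    using assms finite_subset[OF assms] card_mono[OF _ assms] by (simp add: card_Diff_subset of_nat_diff)
  finally show ?thesis .
qed

lemma sum_loc_total: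
  "\<forall>(i, J) \<in> set h. J \<subseteq> {1..N} \<Longrightarrow>
     (\<Sum>k\<in>{1..N}. loc_total k h) = real N * length h - (\<Sum>(i, J)\<leftarrow>h. real (card J))"
proof (induction h)
  case (Cons p h)
  obtain i J where p: "p = (i, J)" by fastforce
  have "(\<Sum>k\<in>{1..N}. loc_total k (p # h)) =
      (\<Sum>k\<in>{1..N}. if k \<notin> J then 1 else 0) + (\<Sum>k\<in>{1..N}. loc_total k h)"
    by (simp add: p loc_total_def sum.distrib)
  moreover have "J \<subseteq> {1..N}" using Cons.prems p by simp
  ultimately show ?case using Cons sum_unscanned_indicator[of J N] by (simp add: p algebra_simps)
qed (simp add: loc_total_def)

lemma set_pmf_play_scans:
  assumes "h \<in> set_pmf (play att env t)"
    and env: "\<And>h. set_pmf (env h) \<subseteq> {J. J \<subseteq> A \<and> card J = ms (length h + 1)}"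
  shows "(\<forall>(i, J) \<in> set h. J \<subseteq> A) \<and> (\<Sum>(i, J)\<leftarrow>h. real (card J)) = (\<Sum>k=1..length h. real (ms k))"
  using assms(1)
proof (induction rule: set_pmf_play_induct)
  case (snoc h i J)
  then show ?case using env[of h] by auto
qed simp

lemma set_pmf_play_totals:
  assumes "h \<in> set_pmf (play att env T)"
    and env: "\<And>h. set_pmf (env h) \<subseteq> {J. J \<subseteq> {1..N} \<and> card J = ms (length h + 1)}"
  shows "att_total h = T - def_total h"
    and "(\<Sum>k\<in>{1..N}. loc_total k h) = real N * T - (\<Sum>k=1..T. real (ms k))"
proof -
  note scans = set_pmf_play_scans[OF assms] and length = length_play[OF assms(1)]
  then have "\<forall>(i, J) \<in> set h. finite J" using finite_subset by fastforce
  then show "att_total h = T - def_total h"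
    using att_total_plus_def_total length by (simp add: eq_diff_eq)
  show "(\<Sum>k\<in>{1..N}. loc_total k h) = real N * T - (\<Sum>k=1..T. real (ms k))"
    using sum_loc_total[of h N] scans length by simp
qed

lemma expected_def_total_le_no_regret:
  fixes env :: "(nat \<times> nat set) list \<Rightarrow> nat set pmf"
  assumes N: "1 \<le> N" and att: "\<And>h. set_pmf (att h) \<subseteq> {1..N}"
    and env: "\<And>h. set_pmf (env h) \<subseteq> {J. J \<subseteq> {1..N} \<and> card J = ms (length h + 1)}"
    and regret: "Max ((\<lambda>k. measure_pmf.expectation (play att env T) (loc_total k)) ` {1..N}) - G
       \<le> measure_pmf.expectation (play att env T) att_total"
  shows "measure_pmf.expectation (play att env T) def_total \<le> (\<Sum>k=1..T. real (ms k)) / N + G"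
proof -
  let ?p = "play att env T"
  let ?S = "\<Sum>k=1..T. real (ms k)"
  let ?E = "measure_pmf.expectation ?p"
  have "finite (set_pmf (att h'))" for h'
    by (rule finite_subset[OF att]) simp
  moreover have "finite (set_pmf (env h))" for h
    by (rule finite_subset[of _ "Pow {1..N}"]) (use env in auto)
  ultimately have int: "integrable ?p f" for f :: "_ \<Rightarrow> real"
    by (intro integrable_measure_pmf_finite finite_set_pmf_play)
  have "?E att_total = ?E (\<lambda>h. T - def_total h)"
    using set_pmf_play_totals(1)[where ms = ms, OF _ env] by (intro integral_cong_AE AE_pmfI) simp_all
  then have att_total: "?E att_total = T - ?E def_total" by (simp add: int)
  have "(\<Sum>k\<in>{1..N}. ?E (loc_total k)) = ?E (\<lambda>h. \<Sum>k\<in>{1..N}. loc_total k h)"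
    by (rule Bochner_Integration.integral_sum[symmetric]) (rule int)
  also have "\<dots> = ?E (\<lambda>h. real N * T - ?S)"
    using set_pmf_play_totals(2)[where ms = ms, OF _ env] by (intro integral_cong_AE AE_pmfI) simp_all
  finally have "real N * T - ?S \<le> real N * Max ((\<lambda>k. ?E (loc_total k)) ` {1..N})"
    using sum_bounded_above[of "{1..N}" "\<lambda>k. ?E (loc_total k)"] by simp
  then have "T - ?S / N \<le> Max ((\<lambda>k. ?E (loc_total k)) ` {1..N})"
    using N by (simp add: field_simps)
  then show ?thesis using regret att_total by linarith
qed

section \<open>Exp3.M-VP\<close>

lemma exp3_weights_snoc:
  "exp3_weights \<eta> N ms (h @ [(i, J)]) =
     exp3_step \<eta> N (ms (length h + 1)) (exp3_weights \<eta> N ms h) i J"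
proof -
  have "[1..<length (h @ [(i, J)]) + 1] = [1..<length h + 1] @ [length h + 1]" by simp
  moreover have "length [1..<length h + 1] = length h" by (simp only: length_upt)
  ultimately have "zip [1..<length (h @ [(i, J)]) + 1] (h @ [(i, J)]) =
      zip [1..<length h + 1] h @ [(length h + 1, (i, J))]"
    by (simp only: zip_append zip_Cons_Cons zip_Nil)
  then show ?thesis by (simp only: exp3_weights_def foldl_append foldl_Cons foldl_Nil fst_conv snd_conv)
qed

lemma exp3_step_eq:
  "exp3_step \<eta> N m w i J =
     (if i \<in> J \<and> i \<notin> S0 \<eta> N m w
      then w(i := w i * exp (real m * \<eta> / (real N * alpha_hat \<eta> N m w i))) else w)"
  by (auto simp: exp3_step_def Let_def fun_eq_iff)

lemma exp3_weights_pos: "0 < exp3_weights \<eta> N ms h j"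
proof (induction h arbitrary: j rule: rev_induct)
  case (snoc p h)
  then show ?case by (cases p) (simp add: exp3_weights_snoc exp3_step_eq)
qed (simp add: exp3_weights_def)

lemma exp3_weights_cong:
  "(\<And>k. 1 \<le> k \<Longrightarrow> k \<le> length h \<Longrightarrow> ms k = ms' k) \<Longrightarrow>
     exp3_weights \<eta> N ms h = exp3_weights \<eta> N ms' h"
proof (induction h rule: rev_induct)
  case (snoc p h)
  then show ?case by (cases p) (simp add: exp3_weights_snoc)
qed (simp add: exp3_weights_def)

lemma exp3mvp_cong:
  "(\<And>k. 1 \<le> k \<Longrightarrow> k \<le> length h + 1 \<Longrightarrow> ms k = ms' k) \<Longrightarrow>
     exp3mvp \<eta> N rnd ms h = exp3mvp \<eta> N rnd ms' h"
  using exp3_weights_cong[of h ms ms' \<eta> N] by (simp add: exp3mvp_def)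

lemma sum_min_split:
  fixes w :: "'a \<Rightarrow> real"
  assumes "finite A"
  shows "(\<Sum>i\<in>A. min (w i) x) = (\<Sum>i\<in>{i\<in>A. w i \<ge> x}. x) + (\<Sum>i\<in>{i\<in>A. w i < x}. w i)"
proof -
  have "(\<Sum>i\<in>A. min (w i) x) = (\<Sum>i\<in>A. if w i \<ge> x then x else w i)"
    by (rule sum.cong) (auto simp: min_def)
  also have "\<dots> = (\<Sum>i\<in>{i\<in>A. w i \<ge> x}. x) + (\<Sum>i\<in>{i\<in>A. w i < x}. w i)"
    using assms by (simp add: sum.If_cases Int_def Collect_neg_eq[symmetric] not_le conj_commute)
  finally show ?thesis .
qed

text \<open>The capping level \<open>\<kappa>\<close> of the algorithm exists by the intermediate value theorem applied to
  \<open>\<kappa> / \<Sum> min (w i) \<kappa>\<close>, which is \<open>1/N\<close> at the least weight and \<open>max w / \<Sum> w\<close> at the largest.\<close>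

lemma capping_level_exists:
  fixes w :: "nat \<Rightarrow> real"
  assumes N: "1 \<le> N" and w_pos: "\<And>i. i \<in> {1..N} \<Longrightarrow> 0 < w i"
    and c_ge: "1 / real N \<le> c" and c_le: "c * (\<Sum>i\<in>{1..N}. w i) \<le> Max (w ` {1..N})"
  shows "\<exists>\<kappa>. \<kappa> / (\<Sum>i\<in>{1..N}. min (w i) \<kappa>) = c"
proof -
  define f where "f \<kappa> = \<kappa> / (\<Sum>i\<in>{1..N}. min (w i) \<kappa>)" for \<kappa>
  define lo where "lo = Min (w ` {1..N})"
  define hi where "hi = Max (w ` {1..N})"
  have ne: "{1..N} \<noteq> {}" using N by auto
  have lo_pos: "0 < lo" unfolding lo_def using ne w_pos by (subst Min_gr_iff) auto
  have lo_le: "lo \<le> w i" and le_hi: "w i \<le> hi" if "i \<in> {1..N}" for i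
    unfolding lo_def hi_def using that by auto
  have "lo \<le> hi" using lo_le le_hi ne by fastforce
  moreover have "f lo \<le> c"
  proof -
    have "(\<Sum>i\<in>{1..N}. min (w i) lo) = (\<Sum>i\<in>{1..N}. lo)"
      by (rule sum.cong) (simp_all add: lo_le min_absorb2)
    then show ?thesis using lo_pos c_ge by (simp add: f_def)
  qed
  moreover have "c \<le> f hi"
  proof -
    have "(\<Sum>i\<in>{1..N}. min (w i) hi) = (\<Sum>i\<in>{1..N}. w i)"
      by (rule sum.cong) (simp_all add: le_hi min_absorb1)
    moreover have "0 < (\<Sum>i\<in>{1..N}. w i)" using ne w_pos by (intro sum_pos) auto
    ultimately show ?thesis using c_le by (simp add: f_def hi_def pos_le_divide_eq)
  qed
  moreover have "continuous_on {lo..hi} f"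
  proof -
    have nz: "(\<Sum>i\<in>{1..N}. min (w i) x) \<noteq> 0" if "x \<in> {lo..hi}" for x
      using that lo_pos ne w_pos sum_pos[of "{1..N}" "\<lambda>i. min (w i) x"] by fastforce
    then show ?thesis unfolding f_def by (intro continuous_intros) (use nz in blast)
  qed
  ultimately obtain \<kappa> where "f \<kappa> = c" using IVT'[of f lo c hi] by blast
  then show ?thesis unfolding f_def by blast
qed

definition cap_share :: "real \<Rightarrow> nat \<Rightarrow> nat \<Rightarrow> real" where
  "cap_share \<eta> N m = (1 / real m - \<eta> / real N) / (1 - \<eta>)"

lemma cap_share_props:
  assumes "1 \<le> m" and "m < N" and "\<eta> < 1"
  shows "1 / real N < cap_share \<eta> N m" and "(1 - \<eta>) * cap_share \<eta> N m + \<eta> / real N = 1 / real m"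
proof -
  have "1 / real N < 1 / real m" using assms by (simp add: frac_less2)
  then have "(1 - \<eta>) / real N < 1 / real m - \<eta> / real N" by (simp add: diff_divide_distrib)
  then show "1 / real N < cap_share \<eta> N m"
    using assms(3) by (simp add: cap_share_def pos_less_divide_eq mult.commute)
  show "(1 - \<eta>) * cap_share \<eta> N m + \<eta> / real N = 1 / real m"
    using assms(3) by (simp add: cap_share_def)
qed

context
  fixes \<eta> :: real and N m :: nat and w :: "nat \<Rightarrow> real"
  assumes m_pos: "1 \<le> m" and m_less: "m < N" and \<eta>_pos: "0 < \<eta>" and \<eta>_less: "\<eta> < 1"
    and w_pos: "\<And>i. i \<in> {1..N} \<Longrightarrow> 0 < w i"
begin

lemma kappa_props:
  assumes capped: "cap_share \<eta> N m * (\<Sum>i\<in>{1..N}. w i) \<le> Max (w ` {1..N})"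
  shows "0 < kappa \<eta> N m w"
    and "kappa \<eta> N m w / (\<Sum>i\<in>{1..N}. min (w i) (kappa \<eta> N m w)) = cap_share \<eta> N m"
proof -
  let ?\<kappa> = "kappa \<eta> N m w"
  note c_gt = cap_share_props(1)[OF m_pos m_less \<eta>_less]
  have "\<exists>\<kappa>. \<kappa> / (\<Sum>i\<in>{1..N}. min (w i) \<kappa>) = cap_share \<eta> N m"
    using m_less w_pos c_gt capped by (intro capping_level_exists) auto
  then show spec: "?\<kappa> / (\<Sum>i\<in>{1..N}. min (w i) ?\<kappa>) = cap_share \<eta> N m"
    unfolding kappa_def cap_share_def[symmetric] sum_min_split[OF finite_atLeastAtMost, symmetric]
    by (rule someI_ex)
  show "0 < ?\<kappa>"
  proof (rule ccontr)
    assume "\<not> 0 < ?\<kappa>"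
    then have "(\<Sum>i\<in>{1..N}. min (w i) ?\<kappa>) = real N * ?\<kappa>"
      using w_pos by (simp add: min_absorb2 less_imp_le order_trans[of _ 0])
    then have "cap_share \<eta> N m \<le> 1 / real N"
      using spec \<open>\<not> 0 < ?\<kappa>\<close> by (cases "?\<kappa> = 0") auto
    then show False using c_gt by simp
  qed
qed

lemma wprime_props:
  assumes i: "i \<in> {1..N}"
  defines "W' \<equiv> \<Sum>j\<in>{1..N}. wprime \<eta> N m w j"
  shows "0 < wprime \<eta> N m w i" and "wprime \<eta> N m w i \<le> w i"
    and "wprime \<eta> N m w i / W' \<le> cap_share \<eta> N m"
    and "i \<in> S0 \<eta> N m w \<Longrightarrow> wprime \<eta> N m w i / W' = cap_share \<eta> N m"
proof -
  let ?c = "cap_share \<eta> N m"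
  have "(\<forall>j\<in>{1..N}. 0 < wprime \<eta> N m w j \<and> wprime \<eta> N m w j \<le> w j \<and> wprime \<eta> N m w j / W' \<le> ?c)
      \<and> (\<forall>j\<in>S0 \<eta> N m w. wprime \<eta> N m w j / W' = ?c)"
  proof (cases "?c * (\<Sum>i\<in>{1..N}. w i) \<le> Max (w ` {1..N})")
    case False
    then have S0: "S0 \<eta> N m w = {}" by (simp add: S0_def cap_share_def)
    then have "wprime \<eta> N m w = w" by (simp add: wprime_def fun_eq_iff)
    moreover have "w j / (\<Sum>i\<in>{1..N}. w i) \<le> ?c" if "j \<in> {1..N}" for j
    proof -
      have "w j \<le> Max (w ` {1..N})" using that by simp
      moreover have "0 < (\<Sum>i\<in>{1..N}. w i)" using that w_pos by (intro sum_pos) auto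
      ultimately show ?thesis using False by (simp add: pos_divide_le_eq)
    qed
    ultimately show ?thesis using S0 w_pos by (simp add: W'_def)
  next
    case True
    let ?\<kappa> = "kappa \<eta> N m w"
    have S0: "S0 \<eta> N m w = {j\<in>{1..N}. ?\<kappa> \<le> w j}"
      using True by (simp add: S0_def cap_share_def)
    have wprime: "wprime \<eta> N m w j = min (w j) ?\<kappa>" if "j \<in> {1..N}" for j
      using that by (simp add: wprime_def S0 min_def)
    then have "W' = (\<Sum>j\<in>{1..N}. min (w j) ?\<kappa>)" unfolding W'_def by (rule sum.cong[OF refl])
    then have share: "?\<kappa> / W' = ?c" using kappa_props(2)[OF True] by simp
    have "0 < W'" unfolding W'_def using i w_pos kappa_props(1)[OF True] wprime
      by (intro sum_pos) auto
    then have "min (w j) ?\<kappa> / W' \<le> ?c" for j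
      unfolding share[symmetric] by (simp add: divide_right_mono)
    then show ?thesis using wprime w_pos kappa_props(1)[OF True] share by (auto simp: S0)
  qed
  then show "0 < wprime \<eta> N m w i" "wprime \<eta> N m w i \<le> w i" "wprime \<eta> N m w i / W' \<le> ?c"
    "i \<in> S0 \<eta> N m w \<Longrightarrow> wprime \<eta> N m w i / W' = ?c"
    using i by auto
qed

lemma sum_wprime_pos: "0 < (\<Sum>j\<in>{1..N}. wprime \<eta> N m w j)"
  using m_less wprime_props(1) by (intro sum_pos) auto

lemma alpha_hat_eq:
  "alpha_hat \<eta> N m w i =
     real m * ((1 - \<eta>) * (wprime \<eta> N m w i / (\<Sum>j\<in>{1..N}. wprime \<eta> N m w j)) + \<eta> / real N)"
  by (simp add: alpha_hat_def)

lemma alpha_hat_S0: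
  assumes "i \<in> S0 \<eta> N m w"
  shows "alpha_hat \<eta> N m w i = 1"
proof -
  have "i \<in> {1..N}" using assms by (auto simp: S0_def split: if_splits)
  then have "wprime \<eta> N m w i / (\<Sum>j\<in>{1..N}. wprime \<eta> N m w j) = cap_share \<eta> N m"
    using assms by (rule wprime_props(4))
  then show ?thesis
    using m_pos cap_share_props(2)[OF m_pos m_less \<eta>_less] by (simp add: alpha_hat_eq)
qed

lemma alpha_hat_bounds:
  assumes "i \<in> {1..N}"
  shows "real m * \<eta> / real N \<le> alpha_hat \<eta> N m w i" and "alpha_hat \<eta> N m w i \<le> 1"
proof -
  let ?s = "wprime \<eta> N m w i / (\<Sum>j\<in>{1..N}. wprime \<eta> N m w j)"
  have "0 \<le> ?s" using wprime_props(1)[OF assms] sum_wprime_pos by simp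
  then have "0 \<le> (1 - \<eta>) * ?s" using \<eta>_less by (intro mult_nonneg_nonneg) auto
  then have "\<eta> / real N \<le> (1 - \<eta>) * ?s + \<eta> / real N" by linarith
  then have "real m * (\<eta> / real N) \<le> real m * ((1 - \<eta>) * ?s + \<eta> / real N)"
    by (rule mult_left_mono) simp
  then show "real m * \<eta> / real N \<le> alpha_hat \<eta> N m w i" by (simp add: alpha_hat_eq)
  have "(1 - \<eta>) * ?s + \<eta> / real N \<le> 1 / real m"
    using wprime_props(3)[OF assms] cap_share_props(2)[OF m_pos m_less \<eta>_less] \<eta>_less
    by (smt (verit) mult_left_mono)
  then show "alpha_hat \<eta> N m w i \<le> 1"
    using m_pos by (simp add: alpha_hat_eq pos_le_divide_eq mult.commute)
qed

lemma sum_alpha_hat: "(\<Sum>i\<in>{1..N}. alpha_hat \<eta> N m w i) = real m"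
  using sum_wprime_pos m_less
  by (simp add: alpha_hat_eq sum.distrib sum_distrib_left[symmetric] sum_divide_distrib[symmetric])

lemma weight_share_le_alpha_hat:
  assumes i: "i \<in> {1..N}" and "i \<notin> S0 \<eta> N m w"
  shows "w i / (\<Sum>j\<in>{1..N}. w j) \<le> alpha_hat \<eta> N m w i / (real m * (1 - \<eta>))"
proof -
  let ?W' = "\<Sum>j\<in>{1..N}. wprime \<eta> N m w j"
  have "?W' \<le> (\<Sum>j\<in>{1..N}. w j)" by (intro sum_mono wprime_props(2)) auto
  then have "w i / (\<Sum>j\<in>{1..N}. w j) \<le> w i / ?W'"
    using sum_wprime_pos w_pos[OF i] by (simp add: frac_le)
  also have "\<dots> \<le> w i / ?W' + \<eta> / (real N * (1 - \<eta>))" using \<eta>_pos \<eta>_less by simp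
  also have "\<dots> = alpha_hat \<eta> N m w i / (real m * (1 - \<eta>))"
    using assms m_pos \<eta>_less by (simp add: alpha_hat_eq wprime_def field_simps)
  finally show ?thesis .
qed

lemma alpha_hat_rounding_conditions:
  "m \<le> N \<and> (\<forall>i\<in>{1..N}. 0 \<le> alpha_hat \<eta> N m w i \<and> alpha_hat \<eta> N m w i \<le> 1) \<and>
     (\<Sum>i\<in>{1..N}. alpha_hat \<eta> N m w i) = real m"
proof -
  have "0 \<le> real m * \<eta> / real N" using \<eta>_pos by simp
  then have "0 \<le> alpha_hat \<eta> N m w i" if "i \<in> {1..N}" for i
    using alpha_hat_bounds(1)[OF that] by linarith
  then show ?thesis using m_less alpha_hat_bounds(2) sum_alpha_hat by auto
qed

end

context
  fixes \<eta> :: real and N :: nat and rnd and ms :: "nat \<Rightarrow> nat" and h :: "(nat \<times> nat set) list"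
  assumes rnd: "valid_rounding N rnd"
    and m_pos: "1 \<le> ms (length h + 1)" and m_less: "ms (length h + 1) < N"
    and \<eta>_pos: "0 < \<eta>" and \<eta>_less: "\<eta> < 1"
begin

lemma exp3mvp_rounding:
  "set_pmf (exp3mvp \<eta> N rnd ms h) \<subseteq> {J. J \<subseteq> {1..N} \<and> card J = ms (length h + 1)} \<and>
   (\<forall>i\<in>{1..N}. measure_pmf.prob (exp3mvp \<eta> N rnd ms h) {J. i \<in> J} =
      alpha_hat \<eta> N (ms (length h + 1)) (exp3_weights \<eta> N ms h) i)"
proof -
  have "ms (length h + 1) \<le> N \<and>
      (\<forall>i\<in>{1..N}. 0 \<le> alpha_hat \<eta> N (ms (length h + 1)) (exp3_weights \<eta> N ms h) i \<and>
        alpha_hat \<eta> N (ms (length h + 1)) (exp3_weights \<eta> N ms h) i \<le> 1) \<and>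
      (\<Sum>i\<in>{1..N}. alpha_hat \<eta> N (ms (length h + 1)) (exp3_weights \<eta> N ms h) i) =
        real (ms (length h + 1))"
    by (rule alpha_hat_rounding_conditions) (use m_pos m_less \<eta>_pos \<eta>_less exp3_weights_pos in auto)
  then show ?thesis using rnd unfolding valid_rounding_def exp3mvp_def Let_def by blast
qed

lemma set_pmf_exp3mvp:
  "set_pmf (exp3mvp \<eta> N rnd ms h) \<subseteq> {J. J \<subseteq> {1..N} \<and> card J = ms (length h + 1)}"
  using exp3mvp_rounding by blast

lemma prob_scanned_exp3mvp:
  "i \<in> {1..N} \<Longrightarrow> measure_pmf.prob (exp3mvp \<eta> N rnd ms h) {J. i \<in> J} =
     alpha_hat \<eta> N (ms (length h + 1)) (exp3_weights \<eta> N ms h) i"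
  using exp3mvp_rounding by blast

end

section \<open>The lower bound\<close>

lemma sum_fun_upd_in:
  fixes f :: "'a \<Rightarrow> 'b::ab_group_add"
  assumes "finite A" and "i \<in> A"
  shows "(\<Sum>j\<in>A. (f(i := v)) j) = (\<Sum>j\<in>A. f j) - f i + v"
  using assms by (simp add: sum.remove[of A i] algebra_simps)

definition log_mean_gap :: "'a set \<Rightarrow> ('a \<Rightarrow> real) \<Rightarrow> real" where
  "log_mean_gap A f = ln ((\<Sum>x\<in>A. f x) / card A) - (\<Sum>x\<in>A. ln (f x)) / card A"

lemma log_mean_gap_const_one: "log_mean_gap A (\<lambda>_. 1) = 0"
  by (simp add: log_mean_gap_def)

lemma log_mean_gap_nonneg:
  fixes f :: "'a \<Rightarrow> real"
  assumes fin: "finite A" and ne: "A \<noteq> {}" and pos: "\<And>x. x \<in> A \<Longrightarrow> 0 < f x"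
  shows "0 \<le> log_mean_gap A f"
proof -
  define \<mu> where "\<mu> = (\<Sum>x\<in>A. f x) / card A"
  have card: "0 < real (card A)" using fin ne by (simp add: card_gt_0_iff)
  have sum_pos: "0 < (\<Sum>x\<in>A. f x)" using fin ne pos by (intro sum_pos) auto
  then have \<mu>_pos: "0 < \<mu>" unfolding \<mu>_def using card by simp
  have "(\<Sum>x\<in>A. ln (f x)) - card A * ln \<mu> = (\<Sum>x\<in>A. ln (f x / \<mu>))"
    using pos \<mu>_pos by (simp add: ln_divide_pos sum_subtractf)
  also have "\<dots> \<le> (\<Sum>x\<in>A. f x / \<mu> - 1)"
    using pos \<mu>_pos by (intro sum_mono ln_le_minus_one) simp
  also have "\<dots> = (\<Sum>x\<in>A. f x) / \<mu> - card A"
    by (simp add: sum_subtractf sum_divide_distrib)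
  also have "\<dots> = 0"
    using card sum_pos by (simp add: \<mu>_def)
  finally show ?thesis using card by (simp add: log_mean_gap_def \<mu>_def pos_divide_le_eq mult.commute)
qed

lemma log_mean_gap_fun_upd_mult_exp:
  fixes f :: "'a \<Rightarrow> real"
  assumes fin: "finite A" and i: "i \<in> A" and pos: "\<And>x. x \<in> A \<Longrightarrow> 0 < f x"
  shows "log_mean_gap A (f(i := f i * exp z)) =
    log_mean_gap A f + (ln (1 + f i / (\<Sum>x\<in>A. f x) * (exp z - 1)) - z / card A)"
proof -
  let ?W = "\<Sum>x\<in>A. f x"
  let ?X = "1 + f i / ?W * (exp z - 1)"
  have W_pos: "0 < ?W" using fin i pos by (intro sum_pos) auto
  have card_pos: "0 < real (card A)" using fin i by (auto simp: card_gt_0_iff)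
  have "(\<Sum>x\<in>A. (f(i := f i * exp z)) x) = ?W - f i + f i * exp z"
    by (rule sum_fun_upd_in[OF fin i])
  also have "\<dots> = ?W * ?X" using W_pos by (simp add: field_simps)
  finally have sum_upd: "(\<Sum>x\<in>A. (f(i := f i * exp z)) x) = ?W * ?X" .
  moreover have "0 < (\<Sum>x\<in>A. (f(i := f i * exp z)) x)" using fin i pos by (intro sum_pos) auto
  ultimately have X_pos: "0 < ?X" using W_pos by (simp add: zero_less_mult_iff)
  have "(\<lambda>x. ln ((f(i := f i * exp z)) x)) = (\<lambda>x. ln (f x))(i := ln (f i) + z)"
    using pos[OF i] by (simp add: fun_eq_iff ln_mult)
  then have "(\<Sum>x\<in>A. ln ((f(i := f i * exp z)) x)) = (\<Sum>x\<in>A. ln (f x)) - ln (f i) + (ln (f i) + z)"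
    using sum_fun_upd_in[OF fin i] by metis
  then have sum_ln_upd: "(\<Sum>x\<in>A. ln ((f(i := f i * exp z)) x)) = (\<Sum>x\<in>A. ln (f x)) + z"
    by simp
  have "log_mean_gap A (f(i := f i * exp z)) = ln (?W / card A * ?X) - ((\<Sum>x\<in>A. ln (f x)) + z) / card A"
    unfolding log_mean_gap_def sum_upd sum_ln_upd by simp
  also have "ln (?W / card A * ?X) = ln (?W / card A) + ln ?X"
    using W_pos X_pos card_pos by (intro ln_mult_pos) auto
  finally show ?thesis by (simp add: log_mean_gap_def add_divide_distrib)
qed

definition reward_potential :: "real \<Rightarrow> nat \<Rightarrow> (nat \<Rightarrow> nat) \<Rightarrow> (nat \<times> nat set) list \<Rightarrow> real" where
  "reward_potential \<eta> N ms h =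
     def_total h - real N * (1 - \<eta>) / \<eta> * log_mean_gap {1..N} (exp3_weights \<eta> N ms h)"

text \<open>Here \<open>z \<le> 1\<close> thanks to the exploration term in \<open>\<alpha>\<close>, so that \<open>exp z \<le> 1 + z + z\<^sup>2\<close>.\<close>

lemma exp_update_gain_bound:
  fixes \<alpha> r m N \<eta> :: real
  assumes \<eta>: "0 < \<eta>" "\<eta> < 1" and m: "0 < m" and N: "0 < N"
    and \<alpha>: "m * \<eta> / N \<le> \<alpha>" and r: "0 \<le> r" "r \<le> \<alpha> / (m * (1 - \<eta>))"
  defines "z \<equiv> m * \<eta> / (N * \<alpha>)"
  shows "(1 - 2 * \<eta>) * m / N \<le> \<alpha> * (1 - N * (1 - \<eta>) / \<eta> * (ln (1 + r * (exp z - 1)) - z / N))"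
proof -
  define K where "K = N * (1 - \<eta>) / \<eta>"
  have \<alpha>_pos: "0 < \<alpha>" using \<alpha> \<eta> m N by (smt (verit) divide_pos_pos mult_pos_pos)
  have z_pos: "0 < z" unfolding z_def using m \<eta> N \<alpha>_pos by simp
  have "z \<le> 1" unfolding z_def using \<alpha> N \<alpha>_pos by (simp add: pos_divide_le_eq mult.commute)
  then have "exp z \<le> 1 + z + z\<^sup>2" using exp_bound z_pos by simp
  have "ln (1 + r * (exp z - 1)) \<le> r * (exp z - 1)"
    using r z_pos by (intro ln_add_one_self_le_self) simp
  also have "\<dots> \<le> r * (z + z\<^sup>2)" using r \<open>exp z \<le> 1 + z + z\<^sup>2\<close> by (intro mult_left_mono) auto
  also have "\<dots> \<le> \<alpha> / (m * (1 - \<eta>)) * (z + z\<^sup>2)" using r z_pos by (intro mult_right_mono) auto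
  finally have "K * \<alpha> * ln (1 + r * (exp z - 1)) \<le> K * \<alpha> * (\<alpha> / (m * (1 - \<eta>)) * (z + z\<^sup>2))"
    using K_def \<eta> N \<alpha>_pos by (intro mult_left_mono) auto
  also have "\<dots> = \<alpha> + m * \<eta> / N"
    unfolding K_def z_def using \<eta> m N \<alpha>_pos by (simp add: field_simps power2_eq_square)
  finally have "K * \<alpha> * ln (1 + r * (exp z - 1)) \<le> \<alpha> + m * \<eta> / N" .
  moreover have "K * \<alpha> * (z / N) = (1 - \<eta>) * m / N"
    unfolding K_def z_def using \<eta> m N \<alpha>_pos by (simp add: field_simps)
  moreover have "(1 - 2 * \<eta>) * m / N = (1 - \<eta>) * m / N - m * \<eta> / N"
    by (simp add: algebra_simps diff_divide_distrib)
  moreover have "\<alpha> * (1 - K * (ln (1 + r * (exp z - 1)) - z / N)) =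
      \<alpha> - K * \<alpha> * ln (1 + r * (exp z - 1)) + K * \<alpha> * (z / N)"
    by (simp add: algebra_simps)
  ultimately show ?thesis unfolding K_def[symmetric] by linarith
qed

lemma potential_gain_ge:
  assumes m_pos: "1 \<le> m" and m_less: "m < N" and \<eta>_pos: "0 < \<eta>" and \<eta>_less: "\<eta> < 1"
    and w_pos: "\<And>j. j \<in> {1..N} \<Longrightarrow> 0 < w j" and i: "i \<in> {1..N}"
  defines "\<alpha> \<equiv> alpha_hat \<eta> N m w i"
  defines "\<Delta> \<equiv> (if i \<in> S0 \<eta> N m w then 0 else
    ln (1 + w i / (\<Sum>j\<in>{1..N}. w j) * (exp (real m * \<eta> / (real N * \<alpha>)) - 1)) - real m * \<eta> / (real N * \<alpha>) / N)"
  shows "(1 - 2 * \<eta>) * m / N \<le> \<alpha> * (1 - real N * (1 - \<eta>) / \<eta> * \<Delta>)"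
proof (cases "i \<in> S0 \<eta> N m w")
  case True
  have "(1 - 2 * \<eta>) * m \<le> 1 * real m" using \<eta>_pos by (intro mult_right_mono) auto
  also have "\<dots> \<le> N" using m_less by simp
  finally have "(1 - 2 * \<eta>) * m / N \<le> 1" using m_less by simp
  then show ?thesis
    using True alpha_hat_S0[where w = w, OF m_pos m_less \<eta>_pos \<eta>_less w_pos] by (simp add: \<Delta>_def \<alpha>_def)
next
  case False
  have "0 \<le> w i / (\<Sum>j\<in>{1..N}. w j)" using w_pos i by (intro divide_nonneg_nonneg sum_nonneg) (auto intro: less_imp_le)
  moreover have "w i / (\<Sum>j\<in>{1..N}. w j) \<le> \<alpha> / (m * (1 - \<eta>))"
    unfolding \<alpha>_def by (rule weight_share_le_alpha_hat[where w = w, OF m_pos m_less \<eta>_pos \<eta>_less w_pos i False])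
  moreover have "m * \<eta> / N \<le> \<alpha>"
    unfolding \<alpha>_def by (rule alpha_hat_bounds(1)[where w = w, OF m_pos m_less \<eta>_pos \<eta>_less w_pos i])
  ultimately show ?thesis
    using exp_update_gain_bound[OF \<eta>_pos \<eta>_less, of m N \<alpha> "w i / (\<Sum>j\<in>{1..N}. w j)"] m_pos m_less False
    by (simp add: \<Delta>_def)
qed

lemma expected_reward_potential_step:
  assumes rnd: "valid_rounding N rnd"
    and m_pos: "1 \<le> ms (length h + 1)" and m_less: "ms (length h + 1) < N"
    and \<eta>_pos: "0 < \<eta>" and \<eta>_less: "\<eta> < 1" and i: "i \<in> {1..N}"
  shows "reward_potential \<eta> N ms h + (1 - 2 * \<eta>) * ms (length h + 1) / N
     \<le> measure_pmf.expectation (exp3mvp \<eta> N rnd ms h) (\<lambda>J. reward_potential \<eta> N ms (h @ [(i, J)]))"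
proof -
  define m where "m = ms (length h + 1)"
  define w where "w = exp3_weights \<eta> N ms h"
  define \<alpha> where "\<alpha> = alpha_hat \<eta> N m w i"
  define z where "z = real m * \<eta> / (real N * \<alpha>)"
  define \<Delta> where "\<Delta> = (if i \<in> S0 \<eta> N m w then 0 else
    ln (1 + w i / (\<Sum>j\<in>{1..N}. w j) * (exp z - 1)) - z / N)"
  define K where "K = real N * (1 - \<eta>) / \<eta>"
  let ?p = "exp3mvp \<eta> N rnd ms h"
  have w_pos: "\<And>j. j \<in> {1..N} \<Longrightarrow> 0 < w j" by (simp add: w_def exp3_weights_pos)
  note set_p = set_pmf_exp3mvp[where ms = ms and h = h, OF rnd m_pos m_less \<eta>_pos \<eta>_less]
  have "set_pmf ?p \<subseteq> Pow {1..N}" using set_p by auto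
  then have fin_p: "finite (set_pmf ?p)" by (rule finite_subset) simp
  have "reward_potential \<eta> N ms (h @ [(i, J)]) =
      reward_potential \<eta> N ms h + (1 - K * \<Delta>) * indicator {J. i \<in> J} J" if "J \<in> set_pmf ?p" for J
  proof -
    have "finite J" using that set_p by (auto intro: finite_subset)
    moreover have "log_mean_gap {1..N} (exp3_weights \<eta> N ms (h @ [(i, J)])) =
        log_mean_gap {1..N} w + (if i \<in> J then \<Delta> else 0)"
      using log_mean_gap_fun_upd_mult_exp[where f = w and z = z, OF finite_atLeastAtMost i w_pos]
      by (simp add: exp3_weights_snoc exp3_step_eq \<Delta>_def z_def \<alpha>_def m_def w_def)
    ultimately show ?thesis unfolding reward_potential_def K_def[symmetric]
      by (cases "i \<in> J") (simp_all add: def_total_snoc w_def algebra_simps)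
  qed
  then have "measure_pmf.expectation ?p (\<lambda>J. reward_potential \<eta> N ms (h @ [(i, J)])) =
      measure_pmf.expectation ?p (\<lambda>J. reward_potential \<eta> N ms h + (1 - K * \<Delta>) * indicator {J. i \<in> J} J)"
    by (intro integral_cong_AE AE_pmfI) simp_all
  also have "\<dots> = reward_potential \<eta> N ms h + \<alpha> * (1 - K * \<Delta>)"
    using prob_scanned_exp3mvp[where ms = ms and h = h, OF rnd m_pos m_less \<eta>_pos \<eta>_less i]
    by (simp add: integrable_measure_pmf_finite[OF fin_p] \<alpha>_def m_def w_def mult.commute)
  finally have E: "measure_pmf.expectation ?p (\<lambda>J. reward_potential \<eta> N ms (h @ [(i, J)])) =
      reward_potential \<eta> N ms h + \<alpha> * (1 - K * \<Delta>)" .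
  have "(1 - 2 * \<eta>) * m / N \<le> \<alpha> * (1 - K * \<Delta>)"
    unfolding \<Delta>_def z_def \<alpha>_def K_def
    by (rule potential_gain_ge[where w = w, OF m_pos[folded m_def] m_less[folded m_def] \<eta>_pos \<eta>_less w_pos i])
  then show ?thesis using E by (simp add: m_def)
qed

lemma expected_def_total_ge_exp3mvp:
  assumes rnd: "valid_rounding N rnd" and ms: "\<And>k. 1 \<le> k \<Longrightarrow> 1 \<le> ms k \<and> ms k < N"
    and \<eta>_pos: "0 < \<eta>" and \<eta>_less: "\<eta> < 1" and att: "\<And>h. set_pmf (att h) \<subseteq> {1..N}"
  shows "(1 - 2 * \<eta>) / N * (\<Sum>k=1..t. real (ms k))
     \<le> measure_pmf.expectation (play att (exp3mvp \<eta> N rnd ms) t) def_total"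
proof -
  let ?p = "play att (exp3mvp \<eta> N rnd ms) t"
  have fin_att: "finite (set_pmf (att h))" for h by (rule finite_subset[OF att]) simp
  have fin_env: "finite (set_pmf (exp3mvp \<eta> N rnd ms h))" for h
  proof -
    have "set_pmf (exp3mvp \<eta> N rnd ms h) \<subseteq> Pow {1..N}"
      using set_pmf_exp3mvp[where ms = ms and h = h, OF rnd _ _ \<eta>_pos \<eta>_less] ms[of "length h + 1"]
      by auto
    then show ?thesis by (rule finite_subset) simp
  qed
  have N: "1 \<le> N" using ms[of 1] by simp
  have "reward_potential \<eta> N ms [] + (\<Sum>k=1..t. (1 - 2 * \<eta>) * ms k / N)
      \<le> measure_pmf.expectation ?p (reward_potential \<eta> N ms)"
  proof (rule expectation_play_ge[OF fin_att fin_env])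
    fix h i assume "i \<in> set_pmf (att (map (\<lambda>(i, J). (i, i \<notin> J)) h))"
    then have "i \<in> {1..N}" using att by blast
    then show "reward_potential \<eta> N ms h + (1 - 2 * \<eta>) * ms (length h + 1) / N
        \<le> measure_pmf.expectation (exp3mvp \<eta> N rnd ms h) (\<lambda>J. reward_potential \<eta> N ms (h @ [(i, J)]))"
      using expected_reward_potential_step[OF rnd _ _ \<eta>_pos \<eta>_less] ms[of "length h + 1"] by simp
  qed
  also have "\<dots> \<le> measure_pmf.expectation ?p def_total"
    using log_mean_gap_nonneg[of "{1..N}", OF _ _ exp3_weights_pos] N \<eta>_pos \<eta>_less
      finite_set_pmf_play[OF fin_att fin_env]
    by (intro integral_mono integrable_measure_pmf_finite) (simp_all add: reward_potential_def)
  finally show ?thesis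
    by (simp add: reward_potential_def exp3_weights_def log_mean_gap_const_one def_total_def
        sum_distrib_left sum_divide_distrib)
qed

section \<open>Averaging over the scan process\<close>

lemma expectation_average_def_total_bounds:
  "0 \<le> measure_pmf.expectation (play att env T) (\<lambda>h. def_total h / T) \<and>
   measure_pmf.expectation (play att env T) (\<lambda>h. def_total h / T) \<le> 1"
proof -
  have bounds: "0 \<le> def_total h / T \<and> def_total h / T \<le> 1" if "h \<in> set_pmf (play att env T)" for h
    using def_total_bounds[of h] length_play[OF that] by (cases "T = 0") (auto simp: divide_le_eq_1)
  then have "norm (def_total h / T) \<le> 1" if "h \<in> set_pmf (play att env T)" for h
    using that by (metis abs_of_nonneg real_norm_def)
  then have "integrable (play att env T) (\<lambda>h. def_total h / T)"
    by (intro measure_pmf.integrable_const_bound[where B = 1] AE_pmfI) auto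
  then show ?thesis
    using bounds by (intro conjI integral_nonneg_AE measure_pmf.integral_le_const AE_pmfI) blast+
qed

text \<open>The defender's first \<open>T\<close> moves depend on \<open>\<omega>\<close> only through the list \<open>M\<^sub>0, \<dots>, M\<^sub>T\<close>,
  a random variable with countably many values.\<close>

lemma measurable_map_upt:
  fixes X :: "nat \<Rightarrow> 'w \<Rightarrow> nat"
  assumes "\<And>t. X t \<in> measurable M (count_space UNIV)"
  shows "(\<lambda>\<omega>. map (\<lambda>t. X t \<omega>) [0..<n]) \<in> measurable M (count_space UNIV)"
proof (induction n)
  case (Suc n)
  have "(\<lambda>\<omega>. map (\<lambda>t. X t \<omega>) [0..<n] @ [X n \<omega>]) \<in> measurable M (count_space UNIV)"
  proof (rule measurable_compose_countable'[where f = "\<lambda>xs \<omega>. xs @ [X n \<omega>]" and I = UNIV])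
    fix xs :: "nat list"
    show "(\<lambda>\<omega>. xs @ [X n \<omega>]) \<in> measurable M (count_space UNIV)"
      using measurable_compose[OF assms[of n], of "\<lambda>k. xs @ [k]" "count_space UNIV"] by simp
  qed (use Suc in auto)
  then show ?case by simp
qed simp

lemma measurable_expectation_play_exp3mvp:
  fixes F :: "(nat \<times> nat set) list \<Rightarrow> real"
  assumes "\<And>t. Mt t \<in> measurable M (count_space UNIV)"
  shows "(\<lambda>\<omega>. measure_pmf.expectation (play att (exp3mvp \<eta> N rnd (\<lambda>t. Mt t \<omega>)) T) F) \<in> borel_measurable M"
proof -
  define ext where "ext xs k = (if k < length xs then xs ! k else 0)" for xs :: "nat list" and k
  have "play att (exp3mvp \<eta> N rnd (\<lambda>t. Mt t \<omega>)) T =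
      play att (exp3mvp \<eta> N rnd (ext (map (\<lambda>t. Mt t \<omega>) [0..<T + 1]))) T" for \<omega>
    by (intro play_cong exp3mvp_cong) (auto simp del: upt_Suc simp: ext_def nth_map nth_upt)
  then show ?thesis
    using measurable_compose[OF measurable_map_upt[OF assms, where n = "T + 1"], of
        "\<lambda>xs. measure_pmf.expectation (play att (exp3mvp \<eta> N rnd (ext xs)) T) F" borel]
    by simp
qed

lemma (in prob_space) wide_sense_stationary_mean:
  assumes wss: "wide_sense_stationary M X \<nu>" and meas: "X t \<in> measurable M (count_space UNIV)"
    and t: "1 \<le> t"
  shows "integrable M (\<lambda>\<omega>. real (X t \<omega>))" and "expectation (\<lambda>\<omega>. real (X t \<omega>)) = \<nu>"
proof -
  have "(\<lambda>\<omega>. real (X t \<omega>)) \<in> borel_measurable M"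
    using measurable_compose[OF meas, of real borel] by simp
  moreover have "integrable M (\<lambda>\<omega>. (real (X t \<omega>))\<^sup>2)"
    using wss t unfolding wide_sense_stationary_def by blast
  ultimately show "integrable M (\<lambda>\<omega>. real (X t \<omega>))"
    by (rule square_integrable_imp_integrable)
  show "expectation (\<lambda>\<omega>. real (X t \<omega>)) = \<nu>"
    using wss t unfolding wide_sense_stationary_def by blast
qed

lemma (in prob_space) wide_sense_stationary_average:
  assumes wss: "wide_sense_stationary M X \<nu>" and meas: "\<And>t. X t \<in> measurable M (count_space UNIV)"
  shows "integrable M (\<lambda>\<omega>. (\<Sum>k=1..T. real (X k \<omega>)) / T)"
    and "1 \<le> T \<Longrightarrow> expectation (\<lambda>\<omega>. (\<Sum>k=1..T. real (X k \<omega>)) / T) = \<nu>"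
proof -
  note mean = wide_sense_stationary_mean[OF wss meas]
  have int: "integrable M (\<lambda>\<omega>. real (X k \<omega>))" if "k \<in> {1..T}" for k
    using that by (intro mean(1)) simp
  then show "integrable M (\<lambda>\<omega>. (\<Sum>k=1..T. real (X k \<omega>)) / T)"
    by (intro integrable_divide Bochner_Integration.integrable_sum)
  assume T: "1 \<le> T"
  have "expectation (\<lambda>\<omega>. \<Sum>k=1..T. real (X k \<omega>)) = (\<Sum>k=1..T. expectation (\<lambda>\<omega>. real (X k \<omega>)))"
    using int by (rule Bochner_Integration.integral_sum)
  also have "\<dots> = T * \<nu>" using mean(2) by simp
  finally show "expectation (\<lambda>\<omega>. (\<Sum>k=1..T. real (X k \<omega>)) / T) = \<nu>"
    using T by simp
qed

lemma (in prob_space) integral_between_affine: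
  fixes X Y :: "'a \<Rightarrow> real"
  assumes X: "integrable M X" and Y: "integrable M Y"
    and lower: "\<And>x. x \<in> space M \<Longrightarrow> A * X x \<le> Y x"
    and upper: "\<And>x. x \<in> space M \<Longrightarrow> Y x \<le> B * X x + C"
  shows "A * expectation X \<le> expectation Y" and "expectation Y \<le> B * expectation X + C"
proof -
  have "A * expectation X = expectation (\<lambda>x. A * X x)" by (rule integral_mult_right_zero[symmetric])
  also have "\<dots> \<le> expectation Y" using X Y lower by (intro integral_mono) auto
  finally show "A * expectation X \<le> expectation Y" .
  have "expectation Y \<le> expectation (\<lambda>x. B * X x + C)" using X Y upper by (intro integral_mono) auto
  also have "\<dots> = expectation (\<lambda>x. B * X x) + expectation (\<lambda>x. C)"
    using X by (intro Bochner_Integration.integral_add) auto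
  also have "\<dots> = B * expectation X + C" by (simp add: prob_space)
  finally show "expectation Y \<le> B * expectation X + C" .
qed

lemma (in prob_space) expected_average_def_reward_bounds:
  fixes Mt :: "nat \<Rightarrow> 'a \<Rightarrow> nat" and att :: "(nat \<times> bool) list \<Rightarrow> nat pmf"
  assumes rnd: "valid_rounding N rnd" and \<eta>: "0 < \<eta>" "\<eta> < 1" and T: "1 \<le> T"
    and meas: "\<And>t. Mt t \<in> measurable M (count_space UNIV)"
    and scans: "\<And>t \<omega>. 1 \<le> t \<Longrightarrow> \<omega> \<in> space M \<Longrightarrow> 1 \<le> Mt t \<omega> \<and> Mt t \<omega> < N"
    and wss: "wide_sense_stationary M Mt \<nu>"
    and att: "\<And>h. set_pmf (att h) \<subseteq> {1..N}"
    and regret: "\<And>env. Max ((\<lambda>k. measure_pmf.expectation (play att env T) (loc_total k)) ` {1..N}) - G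
       \<le> measure_pmf.expectation (play att env T) att_total"
  defines "L \<equiv> \<lambda>\<omega>. measure_pmf.expectation (play att (exp3mvp \<eta> N rnd (\<lambda>t. Mt t \<omega>)) T)
                      (\<lambda>h. def_total h / real T)"
  shows "(1 - 2 * \<eta>) / N * \<nu> \<le> expectation L" and "expectation L \<le> 1 / N * \<nu> + G / T"
proof -
  define X where "X \<omega> = (\<Sum>k=1..T. real (Mt k \<omega>)) / T" for \<omega>
  have "norm (L \<omega>) \<le> 1" for \<omega>
    using expectation_average_def_total_bounds unfolding L_def by (metis abs_of_nonneg real_norm_def)
  moreover have "L \<in> borel_measurable M"
    unfolding L_def by (rule measurable_expectation_play_exp3mvp[OF meas])
  ultimately have "integrable M L" by (intro integrable_const_bound[where B = 1] AE_I2)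
  moreover have "(1 - 2 * \<eta>) / N * X \<omega> \<le> L \<omega> \<and> L \<omega> \<le> 1 / N * X \<omega> + G / T"
    if \<omega>: "\<omega> \<in> space M" for \<omega>
  proof -
    let ?p = "play att (exp3mvp \<eta> N rnd (\<lambda>t. Mt t \<omega>)) T"
    have ms: "\<And>k. 1 \<le> k \<Longrightarrow> 1 \<le> Mt k \<omega> \<and> Mt k \<omega> < N" using scans \<omega> by blast
    have env: "set_pmf (exp3mvp \<eta> N rnd (\<lambda>t. Mt t \<omega>) h) \<subseteq>
        {J. J \<subseteq> {1..N} \<and> card J = Mt (length h + 1) \<omega>}" for h
      using set_pmf_exp3mvp[where ms = "\<lambda>t. Mt t \<omega>" and h = h, OF rnd _ _ \<eta>] ms[of "length h + 1"]
      by simp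
    let ?S = "\<Sum>k=1..T. real (Mt k \<omega>)"
    have L: "L \<omega> = measure_pmf.expectation ?p def_total / T" by (simp add: L_def)
    have "(1 - 2 * \<eta>) / N * ?S \<le> measure_pmf.expectation ?p def_total"
      by (rule expected_def_total_ge_exp3mvp[OF rnd ms \<eta> att])
    then have "(1 - 2 * \<eta>) / N * ?S / T \<le> L \<omega>"
      unfolding L by (rule divide_right_mono) simp
    moreover have "measure_pmf.expectation ?p def_total \<le> ?S / N + G"
      using expected_def_total_le_no_regret[where ms = "\<lambda>t. Mt t \<omega>", OF _ att env regret] ms[of 1]
      by simp
    then have "L \<omega> \<le> (?S / N + G) / T"
      unfolding L by (rule divide_right_mono) simp
    ultimately show ?thesis by (simp add: X_def add_divide_distrib)
  qed
  moreover note wide_sense_stationary_average[OF wss meas, of T, folded X_def]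
  ultimately show "(1 - 2 * \<eta>) / N * \<nu> \<le> expectation L" and "expectation L \<le> 1 / N * \<nu> + G / T"
    using integral_between_affine[of X L "(1 - 2 * \<eta>) / N" "1 / N" "G / T"] T by auto
qed

lemma eta_T_eq:
  assumes "1 \<le> a" and "a \<le> b" and "b < N"
  obtains c where "0 < c" and "\<And>T. eta_T N a b T = min 1 (sqrt (c / real T))"
proof
  define X where "X = real N * real a * ln (real N / real b)"
  define Y where "Y = (real a + (exp 1 - 2) * real b) * real b"
  have "0 < X" unfolding X_def using assms by (intro mult_pos_pos ln_gt_zero) auto
  moreover have "0 \<le> exp 1 - (2::real)" using exp_ge_add_one_self[of 1] by simp
  then have "0 < Y" unfolding Y_def using assms by (intro mult_pos_pos add_pos_nonneg) auto
  ultimately show "0 < X / Y" by simp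
  show "eta_T N a b T = min 1 (sqrt (X / Y / real T))" for T
    by (simp add: eta_T_def X_def Y_def mult.assoc)
qed

lemma eta_T_pos: "1 \<le> a \<Longrightarrow> a \<le> b \<Longrightarrow> b < N \<Longrightarrow> 1 \<le> T \<Longrightarrow> 0 < eta_T N a b T"
  by (erule (2) eta_T_eq) simp

lemma tendsto_eta_T: "1 \<le> a \<Longrightarrow> a \<le> b \<Longrightarrow> b < N \<Longrightarrow> (\<lambda>T. eta_T N a b T) \<longlonglongrightarrow> 0"
proof (erule (2) eta_T_eq)
  fix c :: real assume "\<And>T. eta_T N a b T = min 1 (sqrt (c / real T))"
  moreover have "(\<lambda>T. min 1 (sqrt (c * inverse (real T)))) \<longlonglongrightarrow> min 1 (sqrt (c * 0))"
    by (intro tendsto_intros lim_inverse_n)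
  ultimately show "(\<lambda>T. eta_T N a b T) \<longlonglongrightarrow> 0" by (simp add: divide_inverse)
qed

theorem corollary1p2:
  fixes P :: "'w measure" and Mt :: "nat \<Rightarrow> 'w \<Rightarrow> nat" and N a b :: nat and \<nu> :: real
    and att :: "nat \<Rightarrow> (nat \<times> bool) list \<Rightarrow> nat pmf"
    and rnd :: "(nat \<Rightarrow> real) \<Rightarrow> nat \<Rightarrow> nat set pmf"
  assumes "prob_space P"
    and "1 \<le> a" and "a \<le> b" and "b < N"
    and "\<And>t. Mt t \<in> measurable P (count_space UNIV)"
    and "\<And>t \<omega>. 1 \<le> t \<Longrightarrow> \<omega> \<in> space P \<Longrightarrow> a \<le> Mt t \<omega> \<and> Mt t \<omega> \<le> b"
    and "wide_sense_stationary P Mt \<nu>"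
    and "valid_rounding N rnd"
    and "attacker_no_regret N att"
  shows "liminf (\<lambda>T. ereal (\<integral>\<omega>. measure_pmf.expectation
             (play (att T) (exp3mvp (eta_T N a b T) N rnd (\<lambda>t. Mt t \<omega>)) T)
             (\<lambda>h. def_total h / real T) \<partial>P))
         = ereal (\<nu> / real N)"
proof -
  interpret P: prob_space P by fact
  obtain g :: "nat \<Rightarrow> real" where g: "g \<in> o(\<lambda>T. real T)"
    and att: "\<And>T h. set_pmf (att T h) \<subseteq> {1..N}"
    and regret: "\<And>T env. Max ((\<lambda>k. measure_pmf.expectation (play (att T) env T) (loc_total k)) ` {1..N})
        - g T \<le> measure_pmf.expectation (play (att T) env T) att_total"
    using assms(9) unfolding attacker_no_regret_def by blast
  have scans: "1 \<le> Mt t \<omega> \<and> Mt t \<omega> < N" if "1 \<le> t" "\<omega> \<in> space P" for t \<omega>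
    using assms(2,4) assms(6)[OF that] by linarith
  define u where "u T = (\<integral>\<omega>. measure_pmf.expectation
      (play (att T) (exp3mvp (eta_T N a b T) N rnd (\<lambda>t. Mt t \<omega>)) T) (\<lambda>h. def_total h / real T) \<partial>P)" for T
  define lower where "lower T = (1 - 2 * eta_T N a b T) / N * \<nu>" for T
  define upper where "upper T = 1 / N * \<nu> + g T / T" for T
  have "\<forall>\<^sub>F T in sequentially. lower T \<le> u T \<and> u T \<le> upper T"
    using eventually_ge_at_top[of "1::nat"] order_tendstoD(2)[OF tendsto_eta_T[OF assms(2-4)] zero_less_one]
  proof eventually_elim
    case (elim T)
    note bounds = P.expected_average_def_reward_bounds[OF assms(8) eta_T_pos[OF assms(2-4) elim(1)]
        elim(2) elim(1) assms(5) scans assms(7) att regret]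
    show ?case unfolding u_def lower_def upper_def by (rule conjI[OF bounds])
  qed
  moreover have "lower \<longlonglongrightarrow> \<nu> / N"
    unfolding lower_def using tendsto_eta_T[OF assms(2-4)] assms(4) by (auto intro!: tendsto_eq_intros)
  moreover have "upper \<longlonglongrightarrow> \<nu> / N"
    unfolding upper_def using tendsto_add[OF tendsto_const smalloD_tendsto[OF g], of "1 / N * \<nu>"] by simp
  ultimately have "u \<longlonglongrightarrow> \<nu> / N"
    by (intro tendsto_sandwich[of lower u _ upper]) (auto elim: eventually_mono)
  then have "(\<lambda>T. ereal (u T)) \<longlonglongrightarrow> ereal (\<nu> / N)" by (rule tendsto_ereal)
  then show ?thesis unfolding u_def by (intro lim_imp_Liminf) simp_all
qed

end
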